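(* Let $0<p=q<1/2$, $0<\theta<1$ and $\varepsilon>0$. For $d>0$ and $\alpha\in(p,\ e^{-d}+p-2e^{-d}p)$ let \[ b_1(\alpha,d)=\frac{\theta}{1-\theta}\frac{1}{d\,D_{\mathrm{KL}}(\alpha\|p)},\qquad b_2(\alpha,d)=\frac{1}{1-\theta}\frac{1}{d\,D_{\mathrm{KL}}(\alpha\|e^{-d}+p-2e^{-d}p)}, \] and $m_{\mathrm{COMP},\mathrm{BSC}}=\min_{\alpha,d}\max\{b_1(\alpha,d),b_2(\alpha,d)\}\,k\log(n/k)$. If $m>(1+\varepsilon)m_{\mathrm{COMP},\mathrm{BSC}}$, then (with parameters chosen suitably) noisy COMP recovers $\sigma$ with high probability given $G$ and $\hat\sigma$.
   Context: Noisy group testing model (binary symmetric channel): $n$ individuals, $k\sim n^{\theta}$ infected; $\sigma\in\{0,1\}^n$ uniformly random of Hamming weight $k$. Constant-column design $G$: $m=ck\log(n/k)$ tests, each individual independently assigned to exactly $\Delta=cd\log(n/k)$ distinct tests chosen uniformly at random. A test is truly positive iff it contains an infected individual. Displayed results $\hat\sigma$: independently, each test's true result is flipped with probability $p$ (truly negative displayed positive with probability $p$, truly positive displayed negative with probability $q=p$). Noisy COMP with threshold $\alpha$: declare healthy every individual appearing in at least $\alpha\Delta$ displayed negative tests, the rest infected. $\log$ natural; $D_{\mathrm{KL}}(r\|s)=r\log(r/s)+(1-r)\log\frac{1-r}{1-s}$. "With high probability": probability $\to1$ as $n\to\infty$. *)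

theory Defs
  imports "HOL-Probability.Probability" "HOL-Library.Landau_Symbols"
begin

definition DKL :: "real \<Rightarrow> real \<Rightarrow> real" where
  "DKL r s = r * ln (r / s) + (1 - r) * ln ((1 - r) / (1 - s))"

definition b1 :: "real \<Rightarrow> real \<Rightarrow> real \<Rightarrow> real \<Rightarrow> real" where
  "b1 \<theta> p \<alpha> d = \<theta> / (1 - \<theta>) * (1 / (d * DKL \<alpha> p))"

definition b2 :: "real \<Rightarrow> real \<Rightarrow> real \<Rightarrow> real \<Rightarrow> real" where
  "b2 \<theta> p \<alpha> d = 1 / (1 - \<theta>) * (1 / (d * DKL \<alpha> (exp (-d) + p - 2 * exp (-d) * p)))"

definition admissible :: "real \<Rightarrow> real \<Rightarrow> real \<Rightarrow> bool" where
  "admissible p \<alpha> d \<longleftrightarrow> 0 < d \<and> p < \<alpha> \<and> \<alpha> < exp (-d) + p - 2 * exp (-d) * p"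

text \<open>The constant c such that m_COMP,BSC = c * k log(n/k) (infimum over admissible alpha, d).\<close>
definition comp_const :: "real \<Rightarrow> real \<Rightarrow> real" where
  "comp_const \<theta> p = Inf {max (b1 \<theta> p \<alpha> d) (b2 \<theta> p \<alpha> d) | \<alpha> d. admissible p \<alpha> d}"

text \<open>Displayed result of test a (True = positive): true result XOR flip.\<close>
definition displayed :: "nat set \<Rightarrow> (nat \<Rightarrow> nat set) \<Rightarrow> (nat \<Rightarrow> bool) \<Rightarrow> nat \<Rightarrow> bool" where
  "displayed S G F a = ((\<exists>i\<in>S. a \<in> G i) \<noteq> F a)"

definition noisy_comp :: "nat \<Rightarrow> nat \<Rightarrow> real \<Rightarrow> (nat \<Rightarrow> nat set) \<Rightarrow> (nat \<Rightarrow> bool) \<Rightarrow> nat set" where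
  "noisy_comp n \<Delta> \<alpha> G shown =
     {i \<in> {..<n}. \<not> (\<alpha> * real \<Delta> \<le> real (card {a \<in> G i. \<not> shown a}))}"

text \<open>Probability that noisy COMP recovers sigma: n individuals, k infected, m tests,
  each individual in Delta uniformly random distinct tests, each result flipped with prob p.\<close>
definition success_prob :: "nat \<Rightarrow> nat \<Rightarrow> nat \<Rightarrow> nat \<Rightarrow> real \<Rightarrow> real \<Rightarrow> real" where
  "success_prob n k m \<Delta> p \<alpha> =
     measure_pmf.prob
       (pmf_of_set {S. S \<subseteq> {..<n} \<and> card S = k} \<bind> (\<lambda>S.
        Pi_pmf {..<n} {} (\<lambda>_. pmf_of_set {T. T \<subseteq> {..<m} \<and> card T = \<Delta>}) \<bind> (\<lambda>G.
        map_pmf (\<lambda>F. noisy_comp n \<Delta> \<alpha> G (displayed S G F) = S)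
          (Pi_pmf {..<m} False (\<lambda>_. bernoulli_pmf p)))))
       {True}"

end

theory Submission
  imports Defs "HOL-Library.Ramsey" "HOL-Real_Asymp.Real_Asymp"
begin

text \<open>
  Noisy COMP fails only if some individual is misclassified, so by a union bound the failure
  probability is at most the sum of the individual misclassification probabilities, and each of
  them is a Chernoff bound for the number of tests of that individual that are displayed
  negative.  For an infected individual this number is Binomial(\<open>\<Delta>\<close>, \<open>p\<close>) and reaches
  \<open>\<alpha>\<Delta>\<close> with probability at most \<open>exp (- \<Delta> D(\<alpha>, p)) \<le> (k / n) powr (c d D(\<alpha>, p))\<close>.
  For a healthy individual each of its tests escapes all \<open>k\<close> infected individuals with
  probability about \<open>e\<^sup>-\<^sup>d\<close>, and these escape events are negatively correlated because every
  individual picks its tests uniformly at random; so the count stays below \<open>\<alpha>\<Delta>\<close> with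
  probability at most about \<open>(k / n) powr (c d D(\<alpha>, q))\<close>, where \<open>q = e\<^sup>-\<^sup>d + p - 2 e\<^sup>-\<^sup>d p\<close> is
  the probability that such a test is displayed negative.  For \<open>k \<sim> n\<^sup>\<theta>\<close> the union bound
  \<open>k (k / n) powr (c d D(\<alpha>, p)) + n (k / n) powr (c d D(\<alpha>, q))\<close> tends to \<open>0\<close> exactly when
  \<open>b1 < c\<close> and \<open>b2 < c\<close>, and such \<open>\<alpha>, d\<close> exist because \<open>c\<close> exceeds the infimum
  \<open>comp_const \<theta> p\<close>.
\<close>

section \<open>Uniformly random subsets\<close>

lemma sum_nsets_Suc:
  assumes "finite M" "a \<in> M"
  shows "(\<Sum>U\<in>[M]\<^bsup>Suc D\<^esup>. g U)
       = (\<Sum>U\<in>[M - {a}]\<^bsup>D\<^esup>. g (insert a U)) + (\<Sum>U\<in>[M - {a}]\<^bsup>Suc D\<^esup>. g U)"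
proof -
  have split: "[M]\<^bsup>Suc D\<^esup> = insert a ` [M - {a}]\<^bsup>D\<^esup> \<union> [M - {a}]\<^bsup>Suc D\<^esup>"
  proof (intro equalityI subsetI)
    fix U assume U: "U \<in> [M]\<^bsup>Suc D\<^esup>"
    show "U \<in> insert a ` [M - {a}]\<^bsup>D\<^esup> \<union> [M - {a}]\<^bsup>Suc D\<^esup>"
    proof (cases "a \<in> U")
      case True
      then have "U = insert a (U - {a})" "U - {a} \<in> [M - {a}]\<^bsup>D\<^esup>"
        using U by (auto simp: nsets_def)
      then show ?thesis by blast
    qed (use U in \<open>auto simp: nsets_def\<close>)
  qed (use assms in \<open>auto simp: nsets_def card_insert_if\<close>)
  have "inj_on (insert a) ([M - {a}]\<^bsup>D\<^esup>)"
    by (rule inj_onI) (auto simp: nsets_def)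
  moreover have "insert a ` [M - {a}]\<^bsup>D\<^esup> \<inter> [M - {a}]\<^bsup>Suc D\<^esup> = {}"
    by (auto simp: nsets_def)
  ultimately show ?thesis
    unfolding split using assms
    by (simp add: sum.union_disjoint finite_imp_finite_nsets sum.reindex)
qed

lemma binomial_mix_le:
  fixes r y z :: real
  assumes "0 < n" "real (Suc k) \<le> r * real n" "0 \<le> z" "z \<le> y"
  shows "y * real ((n - 1) choose k) + z * real ((n - 1) choose Suc k)
           \<le> real (n choose Suc k) * (r * y + (1 - r) * z)"
proof -
  have "real n * real ((n - 1) choose k) = real (Suc k) * real (n choose Suc k)"
    using binomial_absorption[of k n] by (metis of_nat_mult)
  also have "\<dots> \<le> r * real n * real (n choose Suc k)"
    using assms(2) by (intro mult_right_mono) auto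
  finally have absorb: "real ((n - 1) choose k) \<le> r * real (n choose Suc k)"
    using assms(1) by (simp add: mult.assoc)
  have "real (n choose Suc k) = real ((n - 1) choose k) + real ((n - 1) choose Suc k)"
    using assms(1) by (metis Suc_diff_1 binomial_Suc_Suc of_nat_add)
  then have "y * real ((n - 1) choose k) + z * real ((n - 1) choose Suc k)
      = z * real (n choose Suc k) + (y - z) * real ((n - 1) choose k)"
    by (simp add: algebra_simps)
  also have "\<dots> \<le> z * real (n choose Suc k) + (y - z) * (r * real (n choose Suc k))"
    using absorb assms(4) by (intro add_left_mono mult_left_mono) auto
  finally show ?thesis by (simp add: algebra_simps)
qed

lemma sum_nsets_Suc_prod_insert:
  fixes y :: real and z :: "'a \<Rightarrow> real"
  assumes "finite M" "a \<in> M" "finite T" "a \<notin> T"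
  shows "(\<Sum>U\<in>[M]\<^bsup>Suc D\<^esup>. \<Prod>b\<in>insert a T. if b \<in> U then y else z b)
       = y * (\<Sum>U\<in>[M - {a}]\<^bsup>D\<^esup>. \<Prod>b\<in>T. if b \<in> U then y else z b)
         + z a * (\<Sum>U\<in>[M - {a}]\<^bsup>Suc D\<^esup>. \<Prod>b\<in>T. if b \<in> U then y else z b)"
proof -
  have "(\<Prod>b\<in>T. if b \<in> insert a U then y else z b) = (\<Prod>b\<in>T. if b \<in> U then y else z b)" for U
    using assms(4) by (intro prod.cong) auto
  then have "(\<Prod>b\<in>insert a T. if b \<in> insert a U then y else z b) = y * (\<Prod>b\<in>T. if b \<in> U then y else z b)"
    and "a \<notin> U \<Longrightarrow> (\<Prod>b\<in>insert a T. if b \<in> U then y else z b) = z a * (\<Prod>b\<in>T. if b \<in> U then y else z b)"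
    for U
    using assms(3,4) by simp_all
  moreover have "a \<notin> U" if "U \<in> [M - {a}]\<^bsup>E\<^esup>" for U E
    using that by (auto simp: nsets_def)
  ultimately show ?thesis
    unfolding sum_nsets_Suc[OF assms(1,2)] by (simp add: sum_distrib_left)
qed

text \<open>Negative correlation: the members of \<open>T\<close> lying in a uniformly random \<open>D\<close>-subset of \<open>M\<close>
  are dominated by independent coins of bias \<open>r\<close>.\<close>
lemma sum_nsets_prod_le:
  fixes y r :: real and z :: "'a \<Rightarrow> real"
  assumes "finite M" "T \<subseteq> M" "0 \<le> r" "\<forall>a\<in>T. 0 \<le> z a \<and> z a \<le> y"
    "real D \<le> r * (real (card M) - real (card T) + 1)"
  shows "(\<Sum>U\<in>[M]\<^bsup>D\<^esup>. \<Prod>a\<in>T. if a \<in> U then y else z a)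
           \<le> real (card M choose D) * (\<Prod>a\<in>T. r * y + (1 - r) * z a)"
proof -
  have "finite T" using assms(1,2) finite_subset by blast
  then show ?thesis using assms
  proof (induction T arbitrary: M D rule: finite_induct)
    case empty
    then show ?case by (simp add: card_nsets)
  next
    case (insert a T M D)
    have za: "0 \<le> z a" "z a \<le> y" using insert.prems(4) by auto
    have z_le_mix: "z b \<le> r * y + (1 - r) * z b" if "b \<in> insert a T" for b
    proof -
      have "0 \<le> r * (y - z b)" using insert.prems(3,4) that by (intro mult_nonneg_nonneg) auto
      then show ?thesis by (simp add: algebra_simps)
    qed
    define P where "P = (\<Prod>b\<in>T. r * y + (1 - r) * z b)"
    have "0 \<le> P"
      unfolding P_def using insert.prems(4) z_le_mix by (intro prod_nonneg) (metis insertCI order_trans)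
    show ?case
    proof (cases D)
      case 0
      have "(\<Prod>b\<in>insert a T. z b) \<le> (\<Prod>b\<in>insert a T. r * y + (1 - r) * z b)"
        using insert.prems(4) z_le_mix by (intro prod_mono) auto
      then show ?thesis using 0 by simp
    next
      case (Suc D')
      define M' where "M' = M - {a}"
      have aM: "a \<in> M" and TM': "T \<subseteq> M'" using insert by (auto simp: M'_def)
      have cM: "card M = Suc (card M')"
        using insert.prems(1) aM unfolding M'_def by (rule card_Suc_Diff1[symmetric])
      have IH: "(\<Sum>U\<in>[M']\<^bsup>E\<^esup>. \<Prod>b\<in>T. if b \<in> U then y else z b) \<le> real (card M' choose E) * P"
        if "E \<le> D" for E
      proof -
        have "real (card M) - real (card (insert a T)) + 1 = real (card M') - real (card T) + 1"
          using cM insert.hyps by simp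
        moreover have "real E \<le> real D" using that by simp
        ultimately have "real E \<le> r * (real (card M') - real (card T) + 1)"
          using insert.prems(5) by simp
        then show ?thesis
          unfolding P_def using insert.prems(1,3,4) TM' by (intro insert.IH) (auto simp: M'_def)
      qed
      have "r * (real (card M) - real (card (insert a T)) + 1) \<le> r * real (card M)"
        using insert.prems(3) insert.hyps by (intro mult_left_mono) auto
      then have "real D \<le> r * real (card M)" using insert.prems(5) by linarith
      have "(\<Sum>U\<in>[M]\<^bsup>D\<^esup>. \<Prod>b\<in>insert a T. if b \<in> U then y else z b)
          \<le> y * (real (card M' choose D') * P) + z a * (real (card M' choose D) * P)"
        unfolding Suc sum_nsets_Suc_prod_insert[OF insert.prems(1) aM insert.hyps, folded M'_def]
        using IH[of D'] IH[of D] za Suc by (intro add_mono mult_left_mono) auto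
      also have "\<dots> = (y * real (card M' choose D') + z a * real (card M' choose D)) * P"
        by (simp add: algebra_simps)
      also have "\<dots> \<le> real (card M choose D) * (r * y + (1 - r) * z a) * P"
        using binomial_mix_le[of "card M" D' r "z a" y] \<open>real D \<le> r * real (card M)\<close> za cM Suc \<open>0 \<le> P\<close>
        by (intro mult_right_mono) auto
      finally show ?thesis using insert.hyps by (simp add: P_def mult.assoc)
    qed
  qed
qed

lemma expectation_nsets_prod_le:
  fixes y r :: real and z :: "'a \<Rightarrow> real"
  assumes "finite M" "T \<subseteq> M" "D \<le> card M" "0 \<le> r" "\<forall>a\<in>T. 0 \<le> z a \<and> z a \<le> y"
    "real D \<le> r * (real (card M) - real (card T) + 1)"
  shows "measure_pmf.expectation (pmf_of_set ([M]\<^bsup>D\<^esup>)) (\<lambda>U. \<Prod>a\<in>T. if a \<in> U then y else z a)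
           \<le> (\<Prod>a\<in>T. r * y + (1 - r) * z a)"
proof -
  have ne: "[M]\<^bsup>D\<^esup> \<noteq> {}" and pos: "0 < card M choose D"
    using assms(3) by (auto simp: nsets_eq_empty_iff)
  have "measure_pmf.expectation (pmf_of_set ([M]\<^bsup>D\<^esup>)) (\<lambda>U. \<Prod>a\<in>T. if a \<in> U then y else z a)
      = (\<Sum>U\<in>[M]\<^bsup>D\<^esup>. \<Prod>a\<in>T. if a \<in> U then y else z a) / real (card M choose D)"
    using ne assms(1) by (simp add: integral_pmf_of_set finite_imp_finite_nsets card_nsets)
  also have "\<dots> \<le> (\<Prod>a\<in>T. r * y + (1 - r) * z a)"
    using sum_nsets_prod_le[OF assms(1,2,4,5,6)] pos by (simp add: divide_le_eq mult.commute)
  finally show ?thesis .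
qed

lemma finite_set_pmf_Pi_pmf:
  assumes "finite A" "\<And>i. i \<in> A \<Longrightarrow> finite (set_pmf (P i))"
  shows "finite (set_pmf (Pi_pmf A dflt P))"
  using assms by (intro finite_subset[OF set_Pi_pmf_subset'] finite_PiE_dflt) auto

lemma expectation_bind_pmf_finite:
  fixes h :: "'b \<Rightarrow> real"
  assumes "finite (set_pmf p)" "\<And>x. x \<in> set_pmf p \<Longrightarrow> finite (set_pmf (f x))"
  shows "measure_pmf.expectation (p \<bind> f) h
           = measure_pmf.expectation p (\<lambda>x. measure_pmf.expectation (f x) h)"
proof -
  have "measure_pmf.expectation (p \<bind> f) h
      = (\<Sum>a\<in>set_pmf p. pmf p a *\<^sub>R measure_pmf.expectation (f a) h)"
    using assms by (intro pmf_expectation_bind) auto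
  also have "\<dots> = measure_pmf.expectation p (\<lambda>x. measure_pmf.expectation (f x) h)"
    using assms by (intro integral_measure_pmf[symmetric]) auto
  finally show ?thesis .
qed

lemma expectation_Pi_pmf_insert:
  fixes f :: "('a \<Rightarrow> 'b) \<Rightarrow> real"
  assumes "finite A" "j \<notin> A" "\<And>i. finite (set_pmf (P i))"
  shows "measure_pmf.expectation (Pi_pmf (insert j A) dflt P) f
           = measure_pmf.expectation (P j)
               (\<lambda>v. measure_pmf.expectation (Pi_pmf A dflt P) (\<lambda>H. f (H(j := v))))"
proof -
  have fin: "finite (set_pmf (Pi_pmf A dflt P))"
    using assms by (intro finite_set_pmf_Pi_pmf) auto
  show ?thesis
    unfolding Pi_pmf_insert'[OF assms(1,2)]
    using fin assms(3) by (simp add: expectation_bind_pmf_finite set_bind_pmf)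
qed

lemma expectation_prod_union_nsets_le:
  fixes y r :: real and x :: "'a \<Rightarrow> real"
  assumes "finite S" "finite M" "T \<subseteq> M" "D \<le> card M" "0 \<le> r" "r \<le> 1"
    "\<forall>a\<in>T. 0 \<le> x a \<and> x a \<le> y" "real D \<le> r * (real (card M) - real (card T) + 1)"
  shows "measure_pmf.expectation (Pi_pmf S {} (\<lambda>_. pmf_of_set ([M]\<^bsup>D\<^esup>)))
            (\<lambda>H. \<Prod>a\<in>T. if \<exists>j\<in>S. a \<in> H j then y else x a)
         \<le> (\<Prod>a\<in>T. y - (1 - r) ^ card S * (y - x a))"
  using assms(1,7)
proof (induction S arbitrary: x rule: finite_induct)
  case empty
  then show ?case by simp
next
  case (insert j S x)
  let ?U = "pmf_of_set ([M]\<^bsup>D\<^esup>)"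
  define \<pi> where "\<pi> = (1 - r) ^ card S"
  have \<pi>: "0 \<le> \<pi>" "\<pi> \<le> 1" unfolding \<pi>_def using assms(5,6) by (auto intro: power_le_one)
  have fin: "finite (set_pmf ?U)"
    using assms(2,4) by (simp add: nsets_eq_empty_iff finite_imp_finite_nsets)
  have "measure_pmf.expectation (Pi_pmf (insert j S) {} (\<lambda>_. ?U))
          (\<lambda>H. \<Prod>a\<in>T. if \<exists>j'\<in>insert j S. a \<in> H j' then y else x a)
      = measure_pmf.expectation ?U (\<lambda>V. measure_pmf.expectation (Pi_pmf S {} (\<lambda>_. ?U))
          (\<lambda>H. \<Prod>a\<in>T. if \<exists>j'\<in>S. a \<in> H j' then y else if a \<in> V then y else x a))"
    using insert.hyps fin by (simp add: expectation_Pi_pmf_insert) (auto intro!: Bochner_Integration.integral_cong prod.cong)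
  also have "\<dots> \<le> measure_pmf.expectation ?U (\<lambda>V. \<Prod>a\<in>T. if a \<in> V then y else y - \<pi> * (y - x a))"
  proof (intro integral_mono integrable_measure_pmf_finite fin)
    fix V
    have "measure_pmf.expectation (Pi_pmf S {} (\<lambda>_. ?U))
            (\<lambda>H. \<Prod>a\<in>T. if \<exists>j'\<in>S. a \<in> H j' then y else if a \<in> V then y else x a)
        \<le> (\<Prod>a\<in>T. y - \<pi> * (y - (if a \<in> V then y else x a)))"
      unfolding \<pi>_def using insert.prems by (intro insert.IH) auto
    also have "\<dots> = (\<Prod>a\<in>T. if a \<in> V then y else y - \<pi> * (y - x a))"
      by (intro prod.cong) auto
    finally show "measure_pmf.expectation (Pi_pmf S {} (\<lambda>_. ?U))
            (\<lambda>H. \<Prod>a\<in>T. if \<exists>j'\<in>S. a \<in> H j' then y else if a \<in> V then y else x a)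
        \<le> (\<Prod>a\<in>T. if a \<in> V then y else y - \<pi> * (y - x a))" .
  qed
  also have "\<dots> \<le> (\<Prod>a\<in>T. r * y + (1 - r) * (y - \<pi> * (y - x a)))"
  proof (rule expectation_nsets_prod_le[OF assms(2,3,4,5) _ assms(8)])
    show "\<forall>a\<in>T. 0 \<le> y - \<pi> * (y - x a) \<and> y - \<pi> * (y - x a) \<le> y"
    proof
      fix a assume "a \<in> T"
      then have "0 \<le> y - x a" "0 \<le> x a" using insert.prems by auto
      then have "0 \<le> \<pi> * (y - x a)" "\<pi> * (y - x a) \<le> y - x a"
        using \<pi> by (auto intro: mult_left_le_one_le)
      then show "0 \<le> y - \<pi> * (y - x a) \<and> y - \<pi> * (y - x a) \<le> y"
        using \<open>0 \<le> x a\<close> by linarith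
    qed
  qed
  also have "\<dots> = (\<Prod>a\<in>T. y - (1 - r) ^ card (insert j S) * (y - x a))"
    using insert.hyps unfolding \<pi>_def by (intro prod.cong) (auto simp: algebra_simps)
  finally show ?case .
qed

lemma expectation_prod_design_le:
  fixes x y :: real and I :: "'i set" and M :: "'m set"
  assumes "finite I" "i \<in> I" "S \<subseteq> I" "i \<notin> S" "finite M" "D \<le> card M" "2 * D \<le> card M + 1"
    "0 \<le> x" "x \<le> y"
  shows "measure_pmf.expectation (Pi_pmf I {} (\<lambda>_. pmf_of_set ([M]\<^bsup>D\<^esup>)))
            (\<lambda>G. \<Prod>a\<in>G i. if \<exists>j\<in>S. a \<in> G j then y else x)
         \<le> (y - (1 - real D / (real (card M) - real D + 1)) ^ card S * (y - x)) ^ D"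
proof -
  let ?U = "pmf_of_set ([M]\<^bsup>D\<^esup>)"
  define A where "A = I - {i}"
  define r where "r = real D / (real (card M) - real D + 1)"
  define \<Phi> where "\<Phi> U H = (\<Prod>a\<in>U. if \<exists>j\<in>S. a \<in> H j then y else x)" for U :: "'m set" and H :: "'i \<Rightarrow> 'm set"
  have I: "I = insert i A" "i \<notin> A" "finite A" and SA: "S \<subseteq> A"
    using assms(1-4) by (auto simp: A_def)
  have set_U: "set_pmf ?U = [M]\<^bsup>D\<^esup>"
    using assms(5,6) by (simp add: nsets_eq_empty_iff finite_imp_finite_nsets)
  have den: "0 < real (card M) - real D + 1" using assms(6) by simp
  then have r: "0 \<le> r" "r \<le> 1" using assms(7) by (auto simp: r_def field_simps)
  have "measure_pmf.expectation (Pi_pmf I {} (\<lambda>_. ?U)) (\<lambda>G. \<Phi> (G i) G)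
      = measure_pmf.expectation ?U (\<lambda>U. measure_pmf.expectation (Pi_pmf A {} (\<lambda>_. ?U)) (\<Phi> U))"
  proof -
    have "\<Phi> U (H(i := U)) = \<Phi> U H" for U H
      using assms(4) unfolding \<Phi>_def by (intro prod.cong) auto
    then show ?thesis
      unfolding I(1) using I(2,3) set_U assms(5)
      by (simp add: expectation_Pi_pmf_insert finite_imp_finite_nsets)
  qed
  also have "\<dots> \<le> (y - (1 - r) ^ card S * (y - x)) ^ D"
  proof (rule measure_pmf.integral_le_const[OF integrable_measure_pmf_finite AE_pmfI])
    show "finite (set_pmf ?U)" using assms(5) set_U by (simp add: finite_imp_finite_nsets)
    fix U assume "U \<in> set_pmf ?U"
    then have U: "U \<subseteq> M" "card U = D" using set_U by (auto simp: nsets_def)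
    have "measure_pmf.expectation (Pi_pmf A {} (\<lambda>_. ?U)) (\<Phi> U)
        = measure_pmf.expectation (Pi_pmf S {} (\<lambda>_. ?U)) (\<Phi> U)"
      unfolding Pi_pmf_subset[OF I(3) SA] \<Phi>_def
      by (simp add: integral_map_pmf cong: Bochner_Integration.integral_cong)
    also have "\<dots> \<le> (\<Prod>a\<in>U. y - (1 - r) ^ card S * (y - x))"
      unfolding \<Phi>_def using assms(5,6,8,9) U r den
      by (intro expectation_prod_union_nsets_le finite_subset[OF SA I(3)]) (auto simp: r_def)
    also have "\<dots> = (y - (1 - r) ^ card S * (y - x)) ^ D" using U by simp
    finally show "measure_pmf.expectation (Pi_pmf A {} (\<lambda>_. ?U)) (\<Phi> U)
        \<le> (y - (1 - r) ^ card S * (y - x)) ^ D" .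
  qed
  finally show ?thesis unfolding \<Phi>_def r_def .
qed

section \<open>Chernoff bounds for the displayed results\<close>

lemma expectation_pow_card_agree:
  fixes t p :: real
  assumes "finite I" "U \<subseteq> I" "0 \<le> t" "0 \<le> p" "p \<le> 1"
  shows "measure_pmf.expectation (Pi_pmf I False (\<lambda>_. bernoulli_pmf p)) (\<lambda>F. t ^ card {a\<in>U. v a = F a})
           = (\<Prod>a\<in>U. if v a then 1 - p + p * t else p + (1 - p) * t)"
proof -
  define g where "g a b = (if a \<in> U \<and> v a = b then t else 1)" for a b
  have "t ^ card {a\<in>U. v a = F a} = (\<Prod>a\<in>I. g a (F a))" for F
  proof -
    have "{a\<in>I. a \<in> U \<and> v a = F a} = {a\<in>U. v a = F a}" using assms(2) by auto
    then show ?thesis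
      using prod.inter_filter[OF assms(1), of "\<lambda>_. t" "\<lambda>a. a \<in> U \<and> v a = F a"]
      by (simp add: g_def)
  qed
  then have "measure_pmf.expectation (Pi_pmf I False (\<lambda>_. bernoulli_pmf p)) (\<lambda>F. t ^ card {a\<in>U. v a = F a})
      = measure_pmf.expectation (Pi_pmf I False (\<lambda>_. bernoulli_pmf p)) (\<lambda>F. \<Prod>a\<in>I. g a (F a))"
    by presburger
  also have "\<dots> = (\<Prod>a\<in>I. measure_pmf.expectation (bernoulli_pmf p) (g a))"
    using assms(1,3) by (intro expectation_prod_Pi_pmf) (auto simp: g_def integrable_measure_pmf_finite)
  also have "\<dots> = (\<Prod>a\<in>I. if a \<in> U then (if v a then 1 - p + p * t else p + (1 - p) * t) else 1)"
    using assms(4,5) by (intro prod.cong) (auto simp: g_def algebra_simps)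
  also have "\<dots> = (\<Prod>a\<in>U. if v a then 1 - p + p * t else p + (1 - p) * t)"
    using assms(1,2) by (simp add: prod.If_cases Int_absorb1)
  finally show ?thesis .
qed

lemma prob_le_expectation_pow_card_agree:
  fixes t p \<beta> :: real
  assumes "finite I" "U \<subseteq> I" "0 < t" "0 \<le> p" "p \<le> 1"
    "\<And>F. F \<in> A \<Longrightarrow> t powr \<beta> \<le> t ^ card {a\<in>U. v a = F a}"
  shows "measure_pmf.prob (Pi_pmf I False (\<lambda>_. bernoulli_pmf p)) A
           \<le> (\<Prod>a\<in>U. if v a then 1 - p + p * t else p + (1 - p) * t) / t powr \<beta>"
proof -
  let ?F = "Pi_pmf I False (\<lambda>_. bernoulli_pmf p)"
  have fin: "finite (set_pmf ?F)"
    using assms(1) by (intro finite_set_pmf_Pi_pmf) auto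
  have "measure_pmf.prob ?F A \<le> measure_pmf.prob ?F {F. t powr \<beta> \<le> t ^ card {a\<in>U. v a = F a}}"
    using assms(6) by (intro measure_pmf.finite_measure_mono) auto
  also have "\<dots> \<le> measure_pmf.expectation ?F (\<lambda>F. t ^ card {a\<in>U. v a = F a}) / t powr \<beta>"
    using integral_Markov_inequality_measure[of ?F "\<lambda>F. t ^ card {a\<in>U. v a = F a}" UNIV "t powr \<beta>"]
      fin assms(3) by (simp add: integrable_measure_pmf_finite)
  also have "\<dots> = (\<Prod>a\<in>U. if v a then 1 - p + p * t else p + (1 - p) * t) / t powr \<beta>"
    using assms by (simp add: expectation_pow_card_agree)
  finally show ?thesis .
qed

section \<open>Noisy COMP on the random design\<close>

abbreviation noise_pmf :: "nat \<Rightarrow> real \<Rightarrow> (nat \<Rightarrow> bool) pmf" where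
  "noise_pmf m p \<equiv> Pi_pmf {..<m} False (\<lambda>_. bernoulli_pmf p)"

abbreviation design_pmf :: "nat \<Rightarrow> nat \<Rightarrow> nat \<Rightarrow> (nat \<Rightarrow> nat set) pmf" where
  "design_pmf n m \<Delta> \<equiv> Pi_pmf {..<n} {} (\<lambda>_. pmf_of_set ([{..<m}]\<^bsup>\<Delta>\<^esup>))"

text \<open>Noisy COMP declares \<open>i\<close> healthy iff the right-hand side holds; \<open>F\<close> is the pattern of flipped tests.\<close>
definition misclassified :: "nat \<Rightarrow> real \<Rightarrow> nat set \<Rightarrow> (nat \<Rightarrow> nat set) \<Rightarrow> nat \<Rightarrow> (nat \<Rightarrow> bool) set" where
  "misclassified \<Delta> \<alpha> S G i = {F. (i \<in> S) = (\<alpha> * real \<Delta> \<le> real (card {a\<in>G i. \<not> displayed S G F a}))}"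

text \<open>\<open>\<pi> (1 - p) + (1 - \<pi>) p\<close>: the probability that a test which is truly negative with
  probability \<open>\<pi>\<close> is displayed negative.\<close>
definition displayed_negative_prob :: "real \<Rightarrow> real \<Rightarrow> real" where
  "displayed_negative_prob p \<pi> = p + \<pi> * (1 - 2 * p)"

lemma displayed_negative_prob_bounds:
  assumes "0 < p" "p < 1/2" "0 < \<pi>" "\<pi> < 1"
  shows "p < displayed_negative_prob p \<pi>" "displayed_negative_prob p \<pi> < 1"
proof -
  have "0 < \<pi> * (1 - 2 * p)" "\<pi> * (1 - 2 * p) < 1 - 2 * p"
    using assms by auto
  then show "p < displayed_negative_prob p \<pi>" "displayed_negative_prob p \<pi> < 1"
    using assms(1) by (auto simp: displayed_negative_prob_def)
qed

lemma displayed_negative_prob_mono: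
  "p \<le> 1/2 \<Longrightarrow> \<pi> \<le> \<pi>' \<Longrightarrow> displayed_negative_prob p \<pi> \<le> displayed_negative_prob p \<pi>'"
  by (simp add: displayed_negative_prob_def mult_right_mono)

lemma displayed_negative_prob_range:
  assumes "0 \<le> p" "p \<le> 1/2" "0 \<le> \<pi>" "\<pi> \<le> 1"
  shows "0 \<le> displayed_negative_prob p \<pi>" "displayed_negative_prob p \<pi> \<le> 1"
proof -
  have "0 \<le> \<pi> * (1 - 2 * p)" "\<pi> * (1 - 2 * p) \<le> 1 - 2 * p"
    using assms by (auto intro: mult_left_le_one_le)
  then show "0 \<le> displayed_negative_prob p \<pi>" "displayed_negative_prob p \<pi> \<le> 1"
    using assms(1) by (simp_all add: displayed_negative_prob_def)
qed

lemma Collect_subset_card_eq_nsets: "finite M \<Longrightarrow> {U. U \<subseteq> M \<and> card U = D} = [M]\<^bsup>D\<^esup>"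
  by (auto simp: nsets_def finite_subset)

lemma set_pmf_design_pmf:
  assumes "G \<in> set_pmf (design_pmf n m \<Delta>)" "i < n" "\<Delta> \<le> m"
  shows "G i \<subseteq> {..<m}" "card (G i) = \<Delta>"
proof -
  have "G i \<in> [{..<m}]\<^bsup>\<Delta>\<^esup>"
    using set_Pi_pmf_subset'[of "{..<n}" "{}"] assms
    by (fastforce simp: PiE_dflt_def nsets_eq_empty_iff finite_imp_finite_nsets)
  then show "G i \<subseteq> {..<m}" "card (G i) = \<Delta>" by (auto simp: nsets_def)
qed

lemma noisy_comp_eq_if_not_misclassified:
  assumes "S \<subseteq> {..<n}" "\<And>i. i < n \<Longrightarrow> F \<notin> misclassified \<Delta> \<alpha> S G i"
  shows "noisy_comp n \<Delta> \<alpha> G (displayed S G F) = S"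
  using assms unfolding noisy_comp_def misclassified_def by auto

lemma prob_noisy_comp_eq_ge:
  assumes "S \<subseteq> {..<n}"
  shows "1 - (\<Sum>i<n. measure_pmf.prob (noise_pmf m p) (misclassified \<Delta> \<alpha> S G i))
           \<le> measure_pmf.prob (noise_pmf m p) {F. noisy_comp n \<Delta> \<alpha> G (displayed S G F) = S}"
proof -
  let ?E = "{F. noisy_comp n \<Delta> \<alpha> G (displayed S G F) = S}"
  have "UNIV - ?E \<subseteq> (\<Union>i<n. misclassified \<Delta> \<alpha> S G i)"
    using noisy_comp_eq_if_not_misclassified[OF assms] by blast
  then have "measure_pmf.prob (noise_pmf m p) (UNIV - ?E)
      \<le> measure_pmf.prob (noise_pmf m p) (\<Union>i<n. misclassified \<Delta> \<alpha> S G i)"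
    by (intro measure_pmf.finite_measure_mono) auto
  also have "\<dots> \<le> (\<Sum>i<n. measure_pmf.prob (noise_pmf m p) (misclassified \<Delta> \<alpha> S G i))"
    by (intro measure_pmf.finite_measure_subadditive_finite) auto
  finally show ?thesis
    using measure_pmf.prob_compl[of ?E "noise_pmf m p"] by simp
qed

lemma prob_misclassified_infected:
  fixes t p \<alpha> :: real
  assumes "i \<in> S" "G i \<subseteq> {..<m}" "card (G i) = \<Delta>" "1 \<le> t" "0 \<le> p" "p \<le> 1"
  shows "measure_pmf.prob (noise_pmf m p) (misclassified \<Delta> \<alpha> S G i)
           \<le> (1 - p + p * t) ^ \<Delta> / t powr (\<alpha> * \<Delta>)"
proof -
  have "measure_pmf.prob (noise_pmf m p) (misclassified \<Delta> \<alpha> S G i)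
      \<le> (\<Prod>a\<in>G i. if \<exists>j\<in>S. a \<in> G j then 1 - p + p * t else p + (1 - p) * t) / t powr (\<alpha> * \<Delta>)"
  proof (rule prob_le_expectation_pow_card_agree)
    fix F assume "F \<in> misclassified \<Delta> \<alpha> S G i"
    then have "\<alpha> * \<Delta> \<le> real (card {a\<in>G i. (\<exists>j\<in>S. a \<in> G j) = F a})"
      using assms(1) by (simp add: misclassified_def displayed_def)
    then show "t powr (\<alpha> * \<Delta>) \<le> t ^ card {a\<in>G i. (\<exists>j\<in>S. a \<in> G j) = F a}"
      using assms(4) powr_mono[of "\<alpha> * \<Delta>" _ t] by (simp flip: powr_realpow)
  qed (use assms in auto)
  also have "(\<Prod>a\<in>G i. if \<exists>j\<in>S. a \<in> G j then 1 - p + p * t else p + (1 - p) * t)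
      = (\<Prod>a\<in>G i. 1 - p + p * t)"
    using assms(1) by (intro prod.cong) auto
  also have "\<dots> = (1 - p + p * t) ^ \<Delta>"
    using assms(3) by simp
  finally show ?thesis .
qed

lemma prob_misclassified_healthy:
  fixes t p \<alpha> :: real
  assumes "i \<notin> S" "G i \<subseteq> {..<m}" "0 < t" "t < 1" "0 \<le> p" "p \<le> 1"
  shows "measure_pmf.prob (noise_pmf m p) (misclassified \<Delta> \<alpha> S G i)
      \<le> (\<Prod>a\<in>G i. if \<exists>j\<in>S. a \<in> G j then 1 - p + p * t else p + (1 - p) * t) / t powr (\<alpha> * \<Delta>)"
proof (rule prob_le_expectation_pow_card_agree)
  fix F assume "F \<in> misclassified \<Delta> \<alpha> S G i"
  then have "real (card {a\<in>G i. (\<exists>j\<in>S. a \<in> G j) = F a}) \<le> \<alpha> * \<Delta>"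
    using assms(1) by (simp add: misclassified_def displayed_def)
  then show "t powr (\<alpha> * \<Delta>) \<le> t ^ card {a\<in>G i. (\<exists>j\<in>S. a \<in> G j) = F a}"
    using assms(3,4) powr_mono'[of _ "\<alpha> * \<Delta>" t] by (simp flip: powr_realpow)
qed (use assms in auto)

lemma expectation_prob_misclassified_healthy:
  fixes t p \<alpha> :: real
  assumes "S \<subseteq> {..<n}" "i < n" "i \<notin> S" "\<Delta> \<le> m" "2 * \<Delta> \<le> m + 1" "0 < t" "t < 1"
    "0 \<le> p" "p \<le> 1/2"
  defines "s \<equiv> displayed_negative_prob p ((1 - real \<Delta> / (real m - real \<Delta> + 1)) ^ card S)"
  shows "measure_pmf.expectation (design_pmf n m \<Delta>)
            (\<lambda>G. measure_pmf.prob (noise_pmf m p) (misclassified \<Delta> \<alpha> S G i))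
         \<le> (1 - s + s * t) ^ \<Delta> / t powr (\<alpha> * \<Delta>)"
proof -
  define y where "y = 1 - p + p * t"
  define x where "x = p + (1 - p) * t"
  have fin: "finite (set_pmf (design_pmf n m \<Delta>))"
    using assms(4) by (intro finite_set_pmf_Pi_pmf) (auto simp: nsets_eq_empty_iff finite_imp_finite_nsets)
  have "measure_pmf.expectation (design_pmf n m \<Delta>)
          (\<lambda>G. measure_pmf.prob (noise_pmf m p) (misclassified \<Delta> \<alpha> S G i))
      \<le> measure_pmf.expectation (design_pmf n m \<Delta>)
          (\<lambda>G. (\<Prod>a\<in>G i. if \<exists>j\<in>S. a \<in> G j then y else x) / t powr (\<alpha> * \<Delta>))"
  proof (intro integral_mono_AE integrable_measure_pmf_finite AE_pmfI fin)
    fix G assume "G \<in> set_pmf (design_pmf n m \<Delta>)"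
    then show "measure_pmf.prob (noise_pmf m p) (misclassified \<Delta> \<alpha> S G i)
        \<le> (\<Prod>a\<in>G i. if \<exists>j\<in>S. a \<in> G j then y else x) / t powr (\<alpha> * \<Delta>)"
      unfolding x_def y_def using set_pmf_design_pmf[OF _ assms(2,4)] assms(3,6-9)
      by (intro prob_misclassified_healthy) auto
  qed
  also have "\<dots> = measure_pmf.expectation (design_pmf n m \<Delta>)
          (\<lambda>G. \<Prod>a\<in>G i. if \<exists>j\<in>S. a \<in> G j then y else x) / t powr (\<alpha> * \<Delta>)"
    by simp
  also have "\<dots> \<le> (y - (1 - real \<Delta> / (real m - real \<Delta> + 1)) ^ card S * (y - x)) ^ \<Delta> / t powr (\<alpha> * \<Delta>)"
  proof (intro divide_right_mono)
    have "0 \<le> (1 - 2 * p) * (1 - t)" using assms(7,9) by simp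
    then have "x \<le> y" by (simp add: x_def y_def algebra_simps)
    have "0 \<le> x" using assms(6,8,9) by (simp add: x_def)
    then show "measure_pmf.expectation (design_pmf n m \<Delta>) (\<lambda>G. \<Prod>a\<in>G i. if \<exists>j\<in>S. a \<in> G j then y else x)
        \<le> (y - (1 - real \<Delta> / (real m - real \<Delta> + 1)) ^ card S * (y - x)) ^ \<Delta>"
      using expectation_prod_design_le[of "{..<n}" i S "{..<m}" \<Delta> x y] assms(1-5)
        \<open>x \<le> y\<close> \<open>0 \<le> x\<close> by simp
  qed simp
  also have "y - (1 - real \<Delta> / (real m - real \<Delta> + 1)) ^ card S * (y - x) = 1 - s + s * t"
    by (simp add: s_def x_def y_def displayed_negative_prob_def algebra_simps)
  finally show ?thesis .
qed

lemma prob_noisy_comp_given_set_ge: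
  fixes p \<alpha> t1 t2 :: real
  assumes "S \<subseteq> {..<n}" "card S = k" "\<Delta> \<le> m" "2 * \<Delta> \<le> m + 1" "0 \<le> p" "p \<le> 1/2"
    "1 \<le> t1" "0 < t2" "t2 < 1"
  defines "s \<equiv> displayed_negative_prob p ((1 - real \<Delta> / (real m - real \<Delta> + 1)) ^ k)"
  shows "1 - (real k * ((1 - p + p * t1) ^ \<Delta> / t1 powr (\<alpha> * \<Delta>))
              + real (n - k) * ((1 - s + s * t2) ^ \<Delta> / t2 powr (\<alpha> * \<Delta>)))
         \<le> measure_pmf.expectation (design_pmf n m \<Delta>)
              (\<lambda>G. measure_pmf.prob (noise_pmf m p) {F. noisy_comp n \<Delta> \<alpha> G (displayed S G F) = S})"
proof -
  define B where "B i = (if i \<in> S then (1 - p + p * t1) ^ \<Delta> / t1 powr (\<alpha> * \<Delta>)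
                         else (1 - s + s * t2) ^ \<Delta> / t2 powr (\<alpha> * \<Delta>))" for i
  have fin: "finite (set_pmf (design_pmf n m \<Delta>))"
    using assms(3) by (intro finite_set_pmf_Pi_pmf) (auto simp: nsets_eq_empty_iff finite_imp_finite_nsets)
  have B: "measure_pmf.expectation (design_pmf n m \<Delta>)
             (\<lambda>G. measure_pmf.prob (noise_pmf m p) (misclassified \<Delta> \<alpha> S G i)) \<le> B i" if "i < n" for i
  proof (cases "i \<in> S")
    case True
    then show ?thesis
      using fin set_pmf_design_pmf[OF _ that assms(3)] assms(5-7)
      by (auto simp: B_def intro!: measure_pmf.integral_le_const integrable_measure_pmf_finite
          AE_pmfI prob_misclassified_infected)
  next
    case False
    then show ?thesis
      using expectation_prob_misclassified_healthy[OF assms(1) that False assms(3,4,8,9,5,6)] assms(2)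
      by (simp add: B_def s_def)
  qed
  have "(\<Sum>i<n. measure_pmf.expectation (design_pmf n m \<Delta>)
             (\<lambda>G. measure_pmf.prob (noise_pmf m p) (misclassified \<Delta> \<alpha> S G i))) \<le> (\<Sum>i<n. B i)"
    using B by (intro sum_mono) auto
  moreover have "(\<Sum>i<n. B i) = real k * ((1 - p + p * t1) ^ \<Delta> / t1 powr (\<alpha> * \<Delta>))
              + real (n - k) * ((1 - s + s * t2) ^ \<Delta> / t2 powr (\<alpha> * \<Delta>))"
    using assms(1,2) unfolding B_def
    by (simp add: sum.If_cases Int_absorb1 Diff_eq[symmetric] card_Diff_subset finite_subset)
  moreover have "1 - (\<Sum>i<n. measure_pmf.expectation (design_pmf n m \<Delta>)
             (\<lambda>G. measure_pmf.prob (noise_pmf m p) (misclassified \<Delta> \<alpha> S G i)))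
      = measure_pmf.expectation (design_pmf n m \<Delta>)
      (\<lambda>G. 1 - (\<Sum>i<n. measure_pmf.prob (noise_pmf m p) (misclassified \<Delta> \<alpha> S G i)))"
    using fin by (simp add: integrable_measure_pmf_finite)
  moreover have "\<dots> \<le> measure_pmf.expectation (design_pmf n m \<Delta>)
      (\<lambda>G. measure_pmf.prob (noise_pmf m p) {F. noisy_comp n \<Delta> \<alpha> G (displayed S G F) = S})"
    using fin assms(1) by (intro integral_mono integrable_measure_pmf_finite prob_noisy_comp_eq_ge)
  ultimately show ?thesis by linarith
qed

lemma success_prob_ge:
  fixes p \<alpha> t1 t2 :: real
  assumes "k \<le> n" "\<Delta> \<le> m" "2 * \<Delta> \<le> m + 1" "0 \<le> p" "p \<le> 1/2" "1 \<le> t1" "0 < t2" "t2 < 1"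
  defines "s \<equiv> displayed_negative_prob p ((1 - real \<Delta> / (real m - real \<Delta> + 1)) ^ k)"
  shows "1 - (real k * ((1 - p + p * t1) ^ \<Delta> / t1 powr (\<alpha> * \<Delta>))
              + real (n - k) * ((1 - s + s * t2) ^ \<Delta> / t2 powr (\<alpha> * \<Delta>)))
         \<le> success_prob n k m \<Delta> p \<alpha>"
proof -
  let ?SK = "pmf_of_set ([{..<n}]\<^bsup>k\<^esup>)"
  have set_SK: "set_pmf ?SK = [{..<n}]\<^bsup>k\<^esup>"
    using assms(1) by (simp add: nsets_eq_empty_iff finite_imp_finite_nsets)
  have "success_prob n k m \<Delta> p \<alpha> = measure_pmf.expectation ?SK (\<lambda>S.
          measure_pmf.expectation (design_pmf n m \<Delta>) (\<lambda>G.
            measure_pmf.prob (noise_pmf m p) {F. noisy_comp n \<Delta> \<alpha> G (displayed S G F) = S}))"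
    unfolding success_prob_def Collect_subset_card_eq_nsets[OF finite_lessThan]
    by (simp add: measure_pmf_single pmf_bind pmf_map vimage_def)
  also have "\<dots> \<ge> 1 - (real k * ((1 - p + p * t1) ^ \<Delta> / t1 powr (\<alpha> * \<Delta>))
              + real (n - k) * ((1 - s + s * t2) ^ \<Delta> / t2 powr (\<alpha> * \<Delta>)))"
  proof (rule measure_pmf.integral_ge_const[OF integrable_measure_pmf_finite AE_pmfI])
    show "finite (set_pmf ?SK)" unfolding set_SK by (simp add: finite_imp_finite_nsets)
    fix S assume "S \<in> set_pmf ?SK"
    then have "S \<subseteq> {..<n}" "card S = k" unfolding set_SK by (auto simp: nsets_def)
    then show "1 - (real k * ((1 - p + p * t1) ^ \<Delta> / t1 powr (\<alpha> * \<Delta>))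
              + real (n - k) * ((1 - s + s * t2) ^ \<Delta> / t2 powr (\<alpha> * \<Delta>)))
        \<le> measure_pmf.expectation (design_pmf n m \<Delta>) (\<lambda>G.
            measure_pmf.prob (noise_pmf m p) {F. noisy_comp n \<Delta> \<alpha> G (displayed S G F) = S})"
      unfolding s_def using assms(2-8) by (rule prob_noisy_comp_given_set_ge)
  qed
  finally show ?thesis .
qed

section \<open>Choice of the parameters\<close>

text \<open>\<open>\<alpha> ln t - ln E[t\<^sup>X]\<close> for a Bernoulli(\<open>s\<close>) variable \<open>X\<close>: Markov's inequality for \<open>t\<^sup>X\<close>
  bounds the tails of a Binomial(\<open>\<Delta>\<close>, \<open>s\<close>) count at \<open>\<alpha>\<Delta>\<close> by \<open>exp (- \<Delta> chernoff_exponent s \<alpha> t)\<close>.\<close>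
definition chernoff_exponent :: "real \<Rightarrow> real \<Rightarrow> real \<Rightarrow> real" where
  "chernoff_exponent s \<alpha> t = \<alpha> * ln t - ln (1 - s + s * t)"

lemma chernoff_bound_eq_exp:
  fixes s \<alpha> t :: real
  assumes "0 < 1 - s + s * t" "0 < t"
  shows "(1 - s + s * t) ^ \<Delta> / t powr (\<alpha> * \<Delta>) = exp (- real \<Delta> * chernoff_exponent s \<alpha> t)"
proof -
  have "(1 - s + s * t) ^ \<Delta> = exp (real \<Delta> * ln (1 - s + s * t))"
    using assms(1) by (simp add: exp_of_nat_mult)
  moreover have "t powr (\<alpha> * \<Delta>) = exp (\<alpha> * real \<Delta> * ln t)"
    using assms(2) by (simp add: powr_def)
  ultimately show ?thesis
    by (simp add: chernoff_exponent_def exp_diff[symmetric] algebra_simps)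
qed

lemma one_minus_add_mult_pos:
  fixes s t :: real
  assumes "0 \<le> s" "s \<le> 1" "0 < t"
  shows "0 < 1 - s + s * t"
proof (cases "s = 1")
  case False
  then have "0 < 1 - s" "0 \<le> s * t" using assms by auto
  then show ?thesis by linarith
qed (use assms in simp)

lemma ln_less_minus_one:
  fixes x :: real
  assumes "0 < x" "x \<noteq> 1"
  shows "ln x < x - 1"
  using ln_le_minus_one[OF assms(1)] ln_eq_minus_one[OF assms(1)] assms(2) by fastforce

lemma DKL_pos:
  assumes "0 < r" "r < 1" "0 < s" "s < 1" "r \<noteq> s"
  shows "0 < DKL r s"
proof -
  have "r * ln (s / r) < r * (s / r - 1)"
    using assms by (intro mult_strict_left_mono ln_less_minus_one) auto
  moreover have "(1 - r) * ln ((1 - s) / (1 - r)) \<le> (1 - r) * ((1 - s) / (1 - r) - 1)"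
    using assms by (intro mult_left_mono ln_le_minus_one) auto
  moreover have "r * (s / r - 1) + (1 - r) * ((1 - s) / (1 - r) - 1) = 0"
    using assms by (simp add: field_simps)
  moreover have "DKL r s = - (r * ln (s / r) + (1 - r) * ln ((1 - s) / (1 - r)))"
    using assms by (simp add: DKL_def ln_div algebra_simps)
  ultimately show ?thesis by linarith
qed

lemma chernoff_exponent_optimal:
  assumes "0 < \<alpha>" "\<alpha> < 1" "0 < s" "s < 1"
  shows "chernoff_exponent s \<alpha> (\<alpha> * (1 - s) / (s * (1 - \<alpha>))) = DKL \<alpha> s"
proof -
  have mgf: "1 - s + s * (\<alpha> * (1 - s) / (s * (1 - \<alpha>))) = (1 - s) / (1 - \<alpha>)"
    using assms by (simp add: field_simps)
  have tilt: "ln (\<alpha> * (1 - s) / (s * (1 - \<alpha>))) = ln \<alpha> + ln (1 - s) - ln s - ln (1 - \<alpha>)"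
    using assms by (simp add: ln_div ln_mult)
  show ?thesis
    unfolding chernoff_exponent_def mgf tilt DKL_def using assms by (simp add: ln_div algebra_simps)
qed

lemma admissible_iff:
  "admissible p \<alpha> d \<longleftrightarrow> 0 < d \<and> p < \<alpha> \<and> \<alpha> < displayed_negative_prob p (exp (-d))"
  by (simp add: admissible_def displayed_negative_prob_def algebra_simps)

lemma admissible_DKL_pos:
  assumes "0 < p" "p < 1/2" "admissible p \<alpha> d"
  shows "0 < DKL \<alpha> p" "0 < DKL \<alpha> (displayed_negative_prob p (exp (-d)))"
  using assms displayed_negative_prob_bounds[OF assms(1,2), of "exp (-d)"]
  by (auto simp: admissible_iff intro!: DKL_pos)

lemma admissible_b_pos:
  assumes "0 < p" "p < 1/2" "0 < \<theta>" "\<theta> < 1" "admissible p \<alpha> d"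
  shows "0 < b1 \<theta> p \<alpha> d" "0 < b2 \<theta> p \<alpha> d"
  using admissible_DKL_pos[OF assms(1,2,5)] assms(3-5)
  by (auto simp: b1_def b2_def admissible_iff displayed_negative_prob_def algebra_simps)

lemma admissible_nonempty:
  assumes "0 < p" "p < 1/2"
  shows "{max (b1 \<theta> p \<alpha> d) (b2 \<theta> p \<alpha> d) | \<alpha> d. admissible p \<alpha> d} \<noteq> {}"
proof -
  have "admissible p ((p + displayed_negative_prob p (exp (-1))) / 2) 1"
    using displayed_negative_prob_bounds[OF assms, of "exp (-1)"] by (simp add: admissible_iff)
  then show ?thesis by blast
qed

lemma comp_const_nonneg:
  assumes "0 < p" "p < 1/2" "0 < \<theta>" "\<theta> < 1"
  shows "0 \<le> comp_const \<theta> p"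
  unfolding comp_const_def using admissible_nonempty[OF assms(1,2)] admissible_b_pos[OF assms]
  by (intro cInf_greatest) (fastforce simp: less_max_iff_disj)+

lemma exists_admissible_below:
  fixes p \<theta> \<epsilon> c :: real
  assumes "0 < p" "p < 1/2" "0 < \<theta>" "\<theta> < 1" "0 < \<epsilon>" "c > (1 + \<epsilon>) * comp_const \<theta> p"
  obtains \<alpha> d where "admissible p \<alpha> d" "\<theta> < c * (1 - \<theta>) * d * DKL \<alpha> p"
    "1 < c * (1 - \<theta>) * d * DKL \<alpha> (displayed_negative_prob p (exp (-d)))"
proof -
  have "comp_const \<theta> p \<le> (1 + \<epsilon>) * comp_const \<theta> p"
    using comp_const_nonneg[OF assms(1-4)] assms(5) by (simp add: algebra_simps)
  then have "comp_const \<theta> p < c" using assms(6) by linarith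
  then obtain \<alpha> d where ad: "admissible p \<alpha> d" "b1 \<theta> p \<alpha> d < c" "b2 \<theta> p \<alpha> d < c"
    using cInf_lessD[OF admissible_nonempty[OF assms(1,2)]] unfolding comp_const_def by fastforce
  have "0 < d" using ad(1) by (simp add: admissible_iff)
  note DKL = admissible_DKL_pos[OF assms(1,2) ad(1)]
  show ?thesis
  proof
    show "admissible p \<alpha> d" by (fact ad(1))
    show "\<theta> < c * (1 - \<theta>) * d * DKL \<alpha> p"
      using ad(2) DKL \<open>0 < d\<close> assms(4) by (simp add: b1_def field_simps)
    show "1 < c * (1 - \<theta>) * d * DKL \<alpha> (displayed_negative_prob p (exp (-d)))"
      using ad(3) DKL \<open>0 < d\<close> assms(4)
      by (simp add: b2_def field_simps displayed_negative_prob_def algebra_simps)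
  qed
qed

text \<open>The design only guarantees that a test escapes all infected individuals with probability
  close to \<open>e\<^sup>-\<^sup>d\<close>, so the healthy individuals are handled at a slightly larger \<open>D0\<close>; this
  costs nothing because the exponent is continuous in \<open>D0\<close>.\<close>
lemma exists_chernoff_parameters:
  fixes p \<alpha> d \<gamma> :: real
  assumes "0 < p" "p < 1/2" "admissible p \<alpha> d" "0 < \<gamma>"
    "1 < \<gamma> * DKL \<alpha> (displayed_negative_prob p (exp (-d)))"
  obtains t1 t2 D0 where "1 \<le> t1" "chernoff_exponent p \<alpha> t1 = DKL \<alpha> p" "0 < t2" "t2 < 1" "d < D0"
    "1 < \<gamma> * chernoff_exponent (displayed_negative_prob p (exp (-D0))) \<alpha> t2"
proof -
  define q where "q = displayed_negative_prob p (exp (-d))"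
  have d: "0 < d" "p < \<alpha>" "\<alpha> < q" using assms(3) by (auto simp: admissible_iff q_def)
  have q: "p < q" "q < 1"
    using displayed_negative_prob_bounds[OF assms(1,2)] d(1) by (auto simp: q_def)
  have \<alpha>: "0 < \<alpha>" "\<alpha> < 1" using assms(1) d q by linarith+
  define t1 where "t1 = \<alpha> * (1 - p) / (p * (1 - \<alpha>))"
  define t2 where "t2 = \<alpha> * (1 - q) / (q * (1 - \<alpha>))"
  have "p * (1 - \<alpha>) \<le> \<alpha> * (1 - p)" using d(2) by (simp add: algebra_simps)
  then have "1 \<le> t1" unfolding t1_def using assms(1) \<alpha> by simp
  have "\<alpha> * (1 - q) < q * (1 - \<alpha>)" using d(3) by (simp add: algebra_simps)
  then have t2: "0 < t2" "t2 < 1" unfolding t2_def using \<alpha> q assms(1) by auto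
  have t1_opt: "chernoff_exponent p \<alpha> t1 = DKL \<alpha> p"
    unfolding t1_def using assms(1,2) \<alpha> by (intro chernoff_exponent_optimal) auto
  have t2_opt: "chernoff_exponent q \<alpha> t2 = DKL \<alpha> q"
    unfolding t2_def using assms(1) q \<alpha> by (intro chernoff_exponent_optimal) auto
  define f where "f D = chernoff_exponent (displayed_negative_prob p (exp (-D))) \<alpha> t2" for D
  have "0 < 1 - q + q * t2" using q t2 assms(1) by (intro one_minus_add_mult_pos) auto
  then have "(f \<longlongrightarrow> f d) (at_right d)"
    unfolding f_def chernoff_exponent_def displayed_negative_prob_def q_def
    by (intro tendsto_intros) auto
  moreover have "1 < \<gamma> * f d" using assms(5) t2_opt by (simp add: f_def q_def)
  ultimately have "\<forall>\<^sub>F D in at_right d. 1 < \<gamma> * f D"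
    using order_tendstoD(1)[OF tendsto_mult_left] by blast
  with eventually_at_right_less have "\<forall>\<^sub>F D in at_right d. d < D \<and> 1 < \<gamma> * f D"
    by (rule eventually_conj)
  then obtain D0 where "d < D0" "1 < \<gamma> * f D0"
    using eventually_happens'[OF trivial_limit_at_right_real] by blast
  then show ?thesis using that \<open>1 \<le> t1\<close> t1_opt t2 by (simp add: f_def)
qed

section \<open>Asymptotics\<close>

lemma exp_neg_le_power_one_minus_div:
  fixes x y D0 :: real
  assumes "0 \<le> x" "x < y" "real k * x \<le> D0 * (y - x)"
  shows "exp (-D0) \<le> (1 - x / y) ^ k"
proof -
  define u where "u = x / (y - x)"
  have "0 \<le> u" using assms(1,2) by (simp add: u_def)
  have "1 - x / y = 1 / (1 + u)"
    using assms(1,2) by (simp add: u_def field_simps)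
  have "real k * u \<le> D0" using assms(2,3) by (simp add: u_def pos_divide_le_eq)
  have "(1 + u) ^ k \<le> exp u ^ k"
    using \<open>0 \<le> u\<close> by (intro power_mono exp_ge_add_one_self) auto
  also have "\<dots> = exp (real k * u)" by (simp add: exp_of_nat_mult)
  also have "\<dots> \<le> exp D0" using \<open>real k * u \<le> D0\<close> by simp
  finally have "1 / exp D0 \<le> 1 / (1 + u) ^ k"
    using \<open>0 \<le> u\<close> by (intro divide_left_mono) auto
  then show ?thesis
    unfolding \<open>1 - x / y = 1 / (1 + u)\<close> by (simp add: exp_minus power_one_over inverse_eq_divide)
qed

lemma design_size_bounds:
  fixes c d D0 L :: real and k :: nat
  assumes "0 < c" "0 < d" "d < D0" "1 \<le> k" "0 \<le> L"
    "real k * (c * d * L + 1) \<le> D0 * (c * real k * L - 2 * c * d * L - 1)"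
  defines "\<Delta> \<equiv> nat \<lceil>c * d * L\<rceil>" and "m \<equiv> nat \<lceil>c * real k * L\<rceil>"
  shows "\<Delta> \<le> m" "2 * \<Delta> \<le> m + 1" "c * d * L \<le> real \<Delta>"
    "exp (-D0) \<le> (1 - real \<Delta> / (real m - real \<Delta> + 1)) ^ k"
    "(1 - real \<Delta> / (real m - real \<Delta> + 1)) ^ k \<le> 1"
proof -
  define W where "W = c * real k * L - 2 * c * d * L - 1"
  have "0 \<le> c * d * L" using assms(1,2,5) by simp
  then have \<Delta>: "c * d * L \<le> real \<Delta>" "real \<Delta> \<le> c * d * L + 1"
    unfolding \<Delta>_def by linarith+
  show "c * d * L \<le> real \<Delta>" by (fact \<Delta>(1))
  have "c * real k * L \<le> real m" unfolding m_def by linarith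
  then have mW: "W \<le> real m - 2 * real \<Delta> + 1" unfolding W_def using \<Delta>(2) by linarith
  have "0 < D0" using assms(2,3) by linarith
  have "0 < W"
  proof (rule ccontr)
    assume "\<not> 0 < W"
    then have "D0 * W \<le> 0" using \<open>0 < D0\<close> by (simp add: mult_nonneg_nonpos)
    moreover have "0 < real k * (c * d * L + 1)" using \<open>0 \<le> c * d * L\<close> assms(4) by simp
    ultimately show False using assms(6) unfolding W_def by linarith
  qed
  then have gap: "0 < real m - 2 * real \<Delta> + 1" using mW by linarith
  then show "2 * \<Delta> \<le> m + 1" "\<Delta> \<le> m" by linarith+
  have "real k * real \<Delta> \<le> real k * (c * d * L + 1)"
    using \<Delta>(2) by (intro mult_left_mono) auto
  also have "\<dots> \<le> D0 * W" using assms(6) unfolding W_def .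
  also have "\<dots> \<le> D0 * (real m - real \<Delta> + 1 - real \<Delta>)"
    using mW \<open>0 < D0\<close> by (intro mult_left_mono) auto
  finally show "exp (-D0) \<le> (1 - real \<Delta> / (real m - real \<Delta> + 1)) ^ k"
    using gap by (intro exp_neg_le_power_one_minus_div) auto
  show "(1 - real \<Delta> / (real m - real \<Delta> + 1)) ^ k \<le> 1"
    using gap by (intro power_le_one) auto
qed

lemma chernoff_term_le:
  fixes s \<alpha> t \<beta> L :: real
  assumes "0 < 1 - s + s * t" "0 < t" "0 \<le> chernoff_exponent s \<alpha> t" "\<beta> * L \<le> real \<Delta>"
    "L = ln (real n / real k)" "0 < k" "0 < n"
  shows "(1 - s + s * t) ^ \<Delta> / t powr (\<alpha> * \<Delta>) \<le> (real k / real n) powr (\<beta> * chernoff_exponent s \<alpha> t)"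
proof -
  have "(1 - s + s * t) ^ \<Delta> / t powr (\<alpha> * \<Delta>) = exp (- real \<Delta> * chernoff_exponent s \<alpha> t)"
    using assms(1,2) by (rule chernoff_bound_eq_exp)
  also have "\<dots> \<le> exp (- (\<beta> * L) * chernoff_exponent s \<alpha> t)"
    using assms(3,4) by (simp add: mult_right_mono)
  also have "\<dots> = (real k / real n) powr (\<beta> * chernoff_exponent s \<alpha> t)"
    using assms(6,7) unfolding assms(5) by (simp add: powr_def ln_div algebra_simps)
  finally show ?thesis .
qed

lemma success_prob_ge_one_minus_error:
  fixes p \<alpha> t1 t2 c d D0 L :: real and k n :: nat
  assumes "0 < p" "p < 1/2" "1 \<le> t1" "0 < t2" "t2 < 1" "0 < c" "0 < d" "d < D0"
    "0 \<le> chernoff_exponent p \<alpha> t1"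
    "0 \<le> chernoff_exponent (displayed_negative_prob p (exp (-D0))) \<alpha> t2"
    "1 \<le> k" "L = ln (real n / real k)" "0 < L"
    "real k * (c * d * L + 1) \<le> D0 * (c * real k * L - 2 * c * d * L - 1)"
  shows "1 - (real k * (real k / real n) powr (c * d * chernoff_exponent p \<alpha> t1)
              + real n * (real k / real n) powr
                  (c * d * chernoff_exponent (displayed_negative_prob p (exp (-D0))) \<alpha> t2))
         \<le> success_prob n k (nat \<lceil>c * real k * L\<rceil>) (nat \<lceil>c * d * L\<rceil>) p \<alpha>"
proof -
  define \<Lambda>1 where "\<Lambda>1 = chernoff_exponent p \<alpha> t1"
  define \<Lambda>2 where "\<Lambda>2 = chernoff_exponent (displayed_negative_prob p (exp (-D0))) \<alpha> t2"
  define \<Delta> where "\<Delta> = nat \<lceil>c * d * L\<rceil>"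
  define m where "m = nat \<lceil>c * real k * L\<rceil>"
  define \<pi> where "\<pi> = (1 - real \<Delta> / (real m - real \<Delta> + 1)) ^ k"
  define s where "s = displayed_negative_prob p \<pi>"
  define s0 where "s0 = displayed_negative_prob p (exp (-D0))"
  note size = design_size_bounds[OF assms(6-8,11) less_imp_le[OF assms(13)] assms(14),
      folded \<Delta>_def m_def, folded \<pi>_def]
  have "0 < n"
  proof (rule ccontr)
    assume "\<not> 0 < n"
    then show False using assms(12,13) by simp
  qed
  then have "1 < real n / real k" using assms(11-13) by (simp add: ln_gt_zero_iff)
  then have "k \<le> n" using assms(11) by (simp add: field_simps)
  have "0 \<le> \<pi>" using size(4) exp_ge_zero[of "-D0"] by linarith
  have "0 < exp (-D0)" "exp (-D0) < 1" using assms(7,8) by auto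
  then have s0: "0 < 1 - s0 + s0 * t2"
    using displayed_negative_prob_bounds[OF assms(1,2), of "exp (-D0)"] assms(1,4)
    unfolding s0_def by (intro one_minus_add_mult_pos) auto
  have "0 \<le> s" "s \<le> 1" "s0 \<le> s"
    using displayed_negative_prob_range[of p \<pi>] displayed_negative_prob_mono[of p "exp (-D0)" \<pi>]
      assms(1,2) \<open>0 \<le> \<pi>\<close> size(4,5) unfolding s_def s0_def by auto
  have B1: "(1 - p + p * t1) ^ \<Delta> / t1 powr (\<alpha> * \<Delta>) \<le> (real k / real n) powr (c * d * \<Lambda>1)"
    unfolding \<Lambda>1_def using assms(1-3,9,11,12) size(3) \<open>0 < n\<close>
    by (intro chernoff_term_le one_minus_add_mult_pos) (auto simp: mult.assoc)
  have "0 \<le> 1 - s + s * t2"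
    using one_minus_add_mult_pos[OF \<open>0 \<le> s\<close> \<open>s \<le> 1\<close> assms(4)] by linarith
  then have "(1 - s + s * t2) ^ \<Delta> / t2 powr (\<alpha> * \<Delta>) \<le> (1 - s0 + s0 * t2) ^ \<Delta> / t2 powr (\<alpha> * \<Delta>)"
  proof (intro divide_right_mono power_mono)
    have "0 \<le> (s - s0) * (1 - t2)" using \<open>s0 \<le> s\<close> assms(5) by simp
    then show "1 - s + s * t2 \<le> 1 - s0 + s0 * t2" by (simp add: algebra_simps)
  qed simp_all
  also have "\<dots> \<le> (real k / real n) powr (c * d * \<Lambda>2)"
    unfolding \<Lambda>2_def s0_def[symmetric] using s0 assms(4,10,11,12) size(3) \<open>0 < n\<close>
    by (intro chernoff_term_le) (auto simp: s0_def mult.assoc)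
  finally have B2: "real (n - k) * ((1 - s + s * t2) ^ \<Delta> / t2 powr (\<alpha> * \<Delta>))
      \<le> real n * (real k / real n) powr (c * d * \<Lambda>2)"
    using \<open>0 \<le> 1 - s + s * t2\<close> by (intro mult_mono) auto
  have "1 - (real k * ((1 - p + p * t1) ^ \<Delta> / t1 powr (\<alpha> * \<Delta>))
              + real (n - k) * ((1 - s + s * t2) ^ \<Delta> / t2 powr (\<alpha> * \<Delta>)))
         \<le> success_prob n k m \<Delta> p \<alpha>"
    unfolding s_def \<pi>_def using \<open>k \<le> n\<close> size assms(1-5) by (intro success_prob_ge) auto
  then show ?thesis
    using B1 B2 mult_left_mono[OF B1, of "real k"] unfolding \<Delta>_def m_def \<Lambda>1_def \<Lambda>2_def by linarith
qed

lemma tendsto_error_term_zero: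
  fixes \<theta> a \<beta> :: real and K f :: "nat \<Rightarrow> real"
  assumes "K \<sim>[at_top] (\<lambda>n. real n powr \<theta>)" "\<And>n. 0 \<le> K n"
    "f \<sim>[at_top] (\<lambda>n. real n powr a)" "a < (1 - \<theta>) * \<beta>"
  shows "((\<lambda>n. f n * (K n / real n) powr \<beta>) \<longlongrightarrow> 0) at_top"
proof -
  have "(\<lambda>n. K n / real n) \<sim>[at_top] (\<lambda>n. real n powr \<theta> / real n)"
    using assms(1) asymp_equiv_refl by (rule asymp_equiv_divide)
  then have "(\<lambda>n. (K n / real n) powr \<beta>) \<sim>[at_top] (\<lambda>n. (real n powr \<theta> / real n) powr \<beta>)"
    using assms(2) by (intro asymp_equiv_powr_real always_eventually) auto
  with assms(3) have equiv: "(\<lambda>n. f n * (K n / real n) powr \<beta>) \<sim>[at_top]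
      (\<lambda>n. real n powr a * (real n powr \<theta> / real n) powr \<beta>)"
    by (rule asymp_equiv_mult)
  have "real n powr a * (real n powr \<theta> / real n) powr \<beta> = real n powr (a - (1 - \<theta>) * \<beta>)" for n
  proof (cases "n = 0")
    case False
    then have "real n powr \<theta> / real n = real n powr (\<theta> - 1)"
      by (simp add: powr_diff)
    then have "real n powr a * (real n powr \<theta> / real n) powr \<beta> = real n powr a * real n powr ((\<theta> - 1) * \<beta>)"
      by (simp add: powr_powr)
    also have "\<dots> = real n powr (a - (1 - \<theta>) * \<beta>)"
      by (simp add: powr_add[symmetric] algebra_simps)
    finally show ?thesis .
  qed simp
  moreover have "((\<lambda>n. real n powr (a - (1 - \<theta>) * \<beta>)) \<longlongrightarrow> 0) at_top"
    using assms(4) by (intro tendsto_neg_powr filterlim_real_sequentially) simp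
  ultimately show ?thesis
    using asymp_equiv_tendsto_transfer[OF asymp_equiv_symI[OF equiv]] by simp
qed

lemma filterlim_ratio_at_top:
  fixes \<theta> :: real and K :: "nat \<Rightarrow> real"
  assumes "K \<sim>[at_top] (\<lambda>n. real n powr \<theta>)" "0 < \<theta>" "\<theta> < 1"
  shows "filterlim K at_top at_top" "filterlim (\<lambda>n. real n / K n) at_top at_top"
proof -
  have "filterlim (\<lambda>n. real n powr \<theta>) at_top at_top"
    using real_powr_at_top[OF assms(2)] filterlim_real_sequentially by (rule filterlim_compose)
  with asymp_equiv_symI[OF assms(1)] show "filterlim K at_top at_top"
    by (rule asymp_equiv_at_top_transfer)
  have "real n / real n powr \<theta> = real n powr (1 - \<theta>)" for n
    by (cases "n = 0") (simp_all add: powr_diff)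
  moreover have "filterlim (\<lambda>n. real n powr (1 - \<theta>)) at_top at_top"
    using real_powr_at_top[of "1 - \<theta>"] assms(3) filterlim_real_sequentially
    by (auto intro: filterlim_compose)
  ultimately have "filterlim (\<lambda>n. real n / real n powr \<theta>) at_top at_top" by simp
  moreover have "(\<lambda>n. real n / real n powr \<theta>) \<sim>[at_top] (\<lambda>n. real n / K n)"
    using asymp_equiv_refl asymp_equiv_symI[OF assms(1)] by (rule asymp_equiv_divide)
  ultimately show "filterlim (\<lambda>n. real n / K n) at_top at_top"
    by (rule asymp_equiv_at_top_transfer[rotated])
qed

lemma eventually_design_condition:
  fixes c d D0 :: real and K L :: "nat \<Rightarrow> real"
  assumes "filterlim K at_top at_top" "filterlim L at_top at_top" "0 < c" "d < D0"
  shows "\<forall>\<^sub>F n in at_top. 1 \<le> K n \<and> 0 < L n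
           \<and> K n * (c * d * L n + 1) \<le> D0 * (c * K n * L n - 2 * c * d * L n - 1)"
proof -
  define g where "g n = D0 * (c - 2 * c * d * inverse (K n) - inverse (K n) * inverse (L n))
                        - (c * d + inverse (L n))" for n
  have "(g \<longlongrightarrow> D0 * (c - 2 * c * d * 0 - 0 * 0) - (c * d + 0)) at_top"
    unfolding g_def using tendsto_inverse_0_at_top[OF assms(1)] tendsto_inverse_0_at_top[OF assms(2)]
    by (intro tendsto_intros)
  moreover have "0 < D0 * (c - 2 * c * d * 0 - 0 * 0) - (c * d + 0)"
    using assms(3,4) by simp
  ultimately have "\<forall>\<^sub>F n in at_top. 0 < g n" by (rule order_tendstoD(1))
  moreover have "\<forall>\<^sub>F n in at_top. 1 \<le> K n" using assms(1) unfolding filterlim_at_top by blast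
  moreover have "\<forall>\<^sub>F n in at_top. 0 < L n" using assms(2) unfolding filterlim_at_top_dense by blast
  ultimately show ?thesis
  proof eventually_elim
    case (elim n)
    then have "0 < K n * L n * g n" by simp
    moreover have "K n * L n * g n = D0 * (c * K n * L n - 2 * c * d * L n - 1) - K n * (c * d * L n + 1)"
      using elim(2,3) by (simp add: g_def field_simps)
    ultimately show ?case using elim(2,3) by linarith
  qed
qed

lemma success_prob_tendsto_one:
  fixes p \<alpha> t1 t2 c d D0 \<theta> :: real and k :: "nat \<Rightarrow> nat"
  assumes "0 < p" "p < 1/2" "0 < \<theta>" "\<theta> < 1" "1 \<le> t1" "0 < t2" "t2 < 1" "0 < c" "0 < d" "d < D0"
    "\<theta> < c * (1 - \<theta>) * d * chernoff_exponent p \<alpha> t1"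
    "1 < c * (1 - \<theta>) * d * chernoff_exponent (displayed_negative_prob p (exp (-D0))) \<alpha> t2"
    "(\<lambda>n. real (k n)) \<sim>[at_top] (\<lambda>n. real n powr \<theta>)"
  shows "((\<lambda>n. success_prob n (k n)
               (nat \<lceil>c * real (k n) * ln (real n / real (k n))\<rceil>)
               (nat \<lceil>c * d * ln (real n / real (k n))\<rceil>) p \<alpha>) \<longlongrightarrow> 1) at_top"
proof -
  define \<Lambda>1 where "\<Lambda>1 = chernoff_exponent p \<alpha> t1"
  define \<Lambda>2 where "\<Lambda>2 = chernoff_exponent (displayed_negative_prob p (exp (-D0))) \<alpha> t2"
  define K where "K n = real (k n)" for n
  define L where "L n = ln (real n / K n)" for n
  define failure_bound where "failure_bound n = K n * (K n / real n) powr (c * d * \<Lambda>1)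
                          + real n * (K n / real n) powr (c * d * \<Lambda>2)" for n
  have \<gamma>: "0 < c * (1 - \<theta>) * d" using assms(4,8,9) by simp
  have "0 < c * (1 - \<theta>) * d * \<Lambda>1" "0 < c * (1 - \<theta>) * d * \<Lambda>2"
    using assms(3,11,12) unfolding \<Lambda>1_def \<Lambda>2_def by linarith+
  then have \<Lambda>: "0 \<le> \<Lambda>1" "0 \<le> \<Lambda>2"
    using zero_less_mult_pos \<gamma> less_imp_le by blast+
  note ratio = filterlim_ratio_at_top[OF assms(13)[folded K_def] assms(3,4)]
  have K_top: "filterlim K at_top at_top" by (fact ratio(1))
  have L_top: "filterlim L at_top at_top"
    unfolding L_def using ln_at_top ratio(2) by (rule filterlim_compose)
  have lower: "\<forall>\<^sub>F n in at_top. 1 - failure_bound n \<le> success_prob n (k n)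
               (nat \<lceil>c * real (k n) * ln (real n / real (k n))\<rceil>)
               (nat \<lceil>c * d * ln (real n / real (k n))\<rceil>) p \<alpha>"
    using eventually_design_condition[OF K_top L_top assms(8,10)]
  proof eventually_elim
    case (elim n)
    then have "1 \<le> k n" by (simp add: K_def)
    with elim show ?case
      using success_prob_ge_one_minus_error[OF assms(1,2,5-10) \<Lambda>[unfolded \<Lambda>1_def \<Lambda>2_def]
          \<open>1 \<le> k n\<close> refl, of n]
      unfolding failure_bound_def \<Lambda>1_def \<Lambda>2_def K_def L_def by simp
  qed
  have upper: "\<forall>\<^sub>F n in at_top. success_prob n (k n)
               (nat \<lceil>c * real (k n) * ln (real n / real (k n))\<rceil>)
               (nat \<lceil>c * d * ln (real n / real (k n))\<rceil>) p \<alpha> \<le> 1"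
    by (simp add: success_prob_def)
  have K_nonneg: "\<And>n. 0 \<le> K n" by (simp add: K_def)
  have "(failure_bound \<longlongrightarrow> 0 + 0) at_top"
    unfolding failure_bound_def
  proof (intro tendsto_add tendsto_error_term_zero[OF assms(13)[folded K_def] K_nonneg])
    show "K \<sim>[at_top] (\<lambda>n. real n powr \<theta>)" by (fact assms(13)[folded K_def])
    show "\<theta> < (1 - \<theta>) * (c * d * \<Lambda>1)" using assms(11) by (simp add: \<Lambda>1_def algebra_simps)
    show "(\<lambda>n. real n) \<sim>[at_top] (\<lambda>n. real n powr 1)" by simp
    show "1 < (1 - \<theta>) * (c * d * \<Lambda>2)" using assms(12) by (simp add: \<Lambda>2_def algebra_simps)
  qed
  then have "((\<lambda>n. 1 - failure_bound n) \<longlongrightarrow> 1) at_top"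
    using tendsto_diff[OF tendsto_const, of failure_bound 0 at_top 1] by simp
  with lower upper show ?thesis
    by (rule tendsto_sandwich[OF _ _ _ tendsto_const])
qed

theorem corollary2p11:
  fixes p \<theta> \<epsilon> c :: real
  assumes "0 < p" and "p < 1/2" and "0 < \<theta>" and "\<theta> < 1" and "0 < \<epsilon>"
    and "c > (1 + \<epsilon>) * comp_const \<theta> p"
  shows "\<exists>\<alpha> d. admissible p \<alpha> d \<and>
     (\<forall>k :: nat \<Rightarrow> nat. (\<lambda>n. real (k n)) \<sim>[at_top] (\<lambda>n. real n powr \<theta>) \<longrightarrow>
        ((\<lambda>n. success_prob n (k n)
               (nat \<lceil>c * real (k n) * ln (real n / real (k n))\<rceil>)
               (nat \<lceil>c * d * ln (real n / real (k n))\<rceil>) p \<alpha>) \<longlongrightarrow> 1) at_top)"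
proof -
  have "0 \<le> (1 + \<epsilon>) * comp_const \<theta> p"
    using comp_const_nonneg[OF assms(1-4)] assms(5) by simp
  then have "0 < c" using assms(6) by linarith
  obtain \<alpha> d where ad: "admissible p \<alpha> d" and infected: "\<theta> < c * (1 - \<theta>) * d * DKL \<alpha> p"
    and healthy: "1 < c * (1 - \<theta>) * d * DKL \<alpha> (displayed_negative_prob p (exp (-d)))"
    using exists_admissible_below[OF assms] .
  have "0 < d" using ad by (simp add: admissible_iff)
  then have "0 < c * (1 - \<theta>) * d" using \<open>0 < c\<close> assms(4) by simp
  then obtain t1 t2 D0 where t: "1 \<le> t1" "chernoff_exponent p \<alpha> t1 = DKL \<alpha> p" "0 < t2" "t2 < 1"
    "d < D0" "1 < c * (1 - \<theta>) * d * chernoff_exponent (displayed_negative_prob p (exp (-D0))) \<alpha> t2"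
    using exists_chernoff_parameters[OF assms(1,2) ad _ healthy] by blast
  show ?thesis
  proof (intro exI conjI allI impI)
    show "admissible p \<alpha> d" by (fact ad)
    fix k :: "nat \<Rightarrow> nat"
    assume "(\<lambda>n. real (k n)) \<sim>[at_top] (\<lambda>n. real n powr \<theta>)"
    with infected show "((\<lambda>n. success_prob n (k n)
               (nat \<lceil>c * real (k n) * ln (real n / real (k n))\<rceil>)
               (nat \<lceil>c * d * ln (real n / real (k n))\<rceil>) p \<alpha>) \<longlongrightarrow> 1) at_top"
      by (intro success_prob_tendsto_one[OF assms(1-4) t(1,3,4) \<open>0 < c\<close> \<open>0 < d\<close> t(5) _ t(6)])
        (simp_all add: t(2))
  qed
qed

end
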